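(* Let $\Lambda=(\mathbb{Z}/L_1)\times(\mathbb{Z}/L_2)\times(\mathbb{Z}/L_3)\times(\mathbb{Z}/L_4)$ be a periodic four-dimensional lattice. Fix a direction $\mu\in\{1,2,3,4\}$ and assume $L_\mu$ is even. Let $U$ be a gauge field, i.e. an assignment of a unitary $N_c\times N_c$ matrix $U_\nu(x)$ (e.g. in $SU(3)$) to each site $x$ and direction $\nu$. Let $\kappa$ satisfy $0<\kappa\le 1/8$, and let $D=I-M$ be the Wilson Dirac operator, acting on $\ell^2(\Lambda)\otimes\mathbb{C}^4\otimes\mathbb{C}^{N_c}$, with hopping term $$(M\psi)(x)=\kappa\sum_{\nu=1}^4\Big[(1-\gamma_\nu)\,U_\nu(x)\,\psi(x+\hat\nu)+(1+\gamma_\nu)\,U_\nu(x-\hat\nu)^\dagger\,\psi(x-\hat\nu)\Big].$$ Here the $\gamma_\nu$ are Hermitian Euclidean Dirac matrices. Split the sites into $b=\{x: x_\mu \text{ even}\}$ (the even three-dimensional slices transverse to $\mu$) and $r=\{x: x_\mu\text{ odd}\}$. After permuting the sites so that $b$-sites come first, write $$D=\begin{pmatrix} I_b-M_{bb} & -M_{br}\\ -M_{rb} & I_r-M_{rr}\end{pmatrix}.$$ Define the Schur complement $$S_{bb}=I_b-M_{bb}-M_{br}(I_r-M_{rr})^{-1}M_{rb}.$$ For each integer $k\ge 1$, define the order-$k$ approximation $$\tilde S^{(k)}_{bb}=I_b-\Big(M_{bb}+M_{br}\sum_{l=0}^{k-1}M_{rr}^{\,l}M_{rb}\Big).$$ Then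 the following hold for every $k\ge1$, with all norms the operator 2-norm. (i) $\|M_{rr}\|<1$, so $S_{bb}$ is well defined and $(I_r-M_{rr})^{-1}=\sum_{l\ge0}M_{rr}^l$. (Stability) $S_{bb}$ and $\tilde S^{(k)}_{bb}$ are non-negative in the sense below. More precisely, $$\Big\|M_{bb}+M_{br}\sum_{l=0}^{\infty}M_{rr}^lM_{rb}\Big\|\le 1,$$ $$\Big\|M_{bb}+M_{br}\sum_{l=0}^{k-1}M_{rr}^lM_{rb}\Big\|\le 1-\tfrac14\left(\tfrac34\right)^k.$$ (Weak regularity) $\tilde S^{(k)}_{bb}$ is invertible and $$\big\|I_b-(\tilde S^{(k)}_{bb})^{-1}S_{bb}\big\|\le 1.$$
   Context: An operator is called non-negative in this sense if it has the form $I-N$ with $\|N\|\le 1$, where $\|\cdot\|$ is the operator 2-norm. Under this definition the Wilson operator $D$ with $\kappa\le 1/8$ is non-negative. The blocks $M_{bb},M_{br},M_{rb},M_{rr}$ are the restrictions of $M$ between the indicated site subsets. In particular, $M_{br}$ and $M_{rb}$ consist only of the hopping terms in direction $\mu$, and $M_{bb}$ and $M_{rr}$ consist of the hopping terms in the three directions $\nu\ne\mu$. *)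

theory Defs
  imports Complex_Main
begin

text \<open>An operator between l2(Y) and l2(X), for finite index sets X, Y, is
represented by its kernel A :: 'i => 'i => complex; only the entries on X x Y matter.\<close>

definition idm :: "'i \<Rightarrow> 'i \<Rightarrow> complex" where
  "idm = (\<lambda>i j. if i = j then 1 else 0)"

definition blk :: "'i set \<Rightarrow> 'i set \<Rightarrow> ('i \<Rightarrow> 'i \<Rightarrow> complex) \<Rightarrow> 'i \<Rightarrow> 'i \<Rightarrow> complex" where
  "blk X Y A = (\<lambda>i j. if i \<in> X \<and> j \<in> Y then A i j else 0)"

definition mat_mult :: "'i set \<Rightarrow> ('i \<Rightarrow> 'i \<Rightarrow> complex) \<Rightarrow> ('i \<Rightarrow> 'i \<Rightarrow> complex)
    \<Rightarrow> 'i \<Rightarrow> 'i \<Rightarrow> complex" where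
  "mat_mult S A B = (\<lambda>i j. \<Sum>k\<in>S. A i k * B k j)"

fun mat_pow :: "'i set \<Rightarrow> ('i \<Rightarrow> 'i \<Rightarrow> complex) \<Rightarrow> nat \<Rightarrow> 'i \<Rightarrow> 'i \<Rightarrow> complex" where
  "mat_pow S A 0 = blk S S idm"
| "mat_pow S A (Suc n) = mat_mult S A (mat_pow S A n)"

definition mat_apply :: "'i set \<Rightarrow> ('i \<Rightarrow> 'i \<Rightarrow> complex) \<Rightarrow> ('i \<Rightarrow> complex) \<Rightarrow> 'i \<Rightarrow> complex" where
  "mat_apply Y A v = (\<lambda>i. \<Sum>j\<in>Y. A i j * v j)"

definition vnorm :: "'i set \<Rightarrow> ('i \<Rightarrow> complex) \<Rightarrow> real" where
  "vnorm X v = sqrt (\<Sum>i\<in>X. (cmod (v i))\<^sup>2)"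

definition opnorm :: "'i set \<Rightarrow> 'i set \<Rightarrow> ('i \<Rightarrow> 'i \<Rightarrow> complex) \<Rightarrow> real" where
  "opnorm X Y A = Sup ((\<lambda>v. vnorm X (mat_apply Y A v)) ` {v. vnorm Y v \<le> 1})"

definition invertible_on :: "'i set \<Rightarrow> ('i \<Rightarrow> 'i \<Rightarrow> complex) \<Rightarrow> bool" where
  "invertible_on S A \<longleftrightarrow> (\<exists>B. \<forall>i\<in>S. \<forall>j\<in>S.
      mat_mult S A B i j = idm i j \<and> mat_mult S B A i j = idm i j)"

definition inv_on :: "'i set \<Rightarrow> ('i \<Rightarrow> 'i \<Rightarrow> complex) \<Rightarrow> 'i \<Rightarrow> 'i \<Rightarrow> complex" where
  "inv_on S A = blk S S (SOME B. \<forall>i\<in>S. \<forall>j\<in>S.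
      mat_mult S A B i j = idm i j \<and> mat_mult S B A i j = idm i j)"

definition nonneg_on :: "'i set \<Rightarrow> ('i \<Rightarrow> 'i \<Rightarrow> complex) \<Rightarrow> bool" where
  "nonneg_on S A \<longleftrightarrow> (\<exists>N. (\<forall>i\<in>S. \<forall>j\<in>S. A i j = idm i j - N i j) \<and> opnorm S S N \<le> 1)"

text \<open>Sites of the periodic lattice Z/L_0 x ... x Z/L_3 (directions numbered 0..3):
functions x :: nat => nat with x nu < L nu for nu < 4 and x nu = 0 otherwise.\<close>
definition sites :: "(nat \<Rightarrow> nat) \<Rightarrow> (nat \<Rightarrow> nat) set" where
  "sites L = {x. (\<forall>\<nu><4. x \<nu> < L \<nu>) \<and> (\<forall>\<nu>\<ge>4. x \<nu> = 0)}"

definition fwd :: "(nat \<Rightarrow> nat) \<Rightarrow> nat \<Rightarrow> (nat \<Rightarrow> nat) \<Rightarrow> (nat \<Rightarrow> nat)" where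
  "fwd L \<nu> x = x(\<nu> := (x \<nu> + 1) mod L \<nu>)"

definition bwd :: "(nat \<Rightarrow> nat) \<Rightarrow> nat \<Rightarrow> (nat \<Rightarrow> nat) \<Rightarrow> (nat \<Rightarrow> nat)" where
  "bwd L \<nu> x = x(\<nu> := (x \<nu> + L \<nu> - 1) mod L \<nu>)"

type_synonym idx = "(nat \<Rightarrow> nat) \<times> nat \<times> nat"  (* site, spin, colour *)

definition indices :: "(nat \<Rightarrow> nat) \<Rightarrow> nat \<Rightarrow> idx set" where
  "indices L Nc = sites L \<times> {..<4} \<times> {..<Nc}"

definition unitary_mat :: "nat \<Rightarrow> (nat \<Rightarrow> nat \<Rightarrow> complex) \<Rightarrow> bool" where
  "unitary_mat n V \<longleftrightarrow> (\<forall>i<n. \<forall>j<n.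
      (\<Sum>k<n. cnj (V k i) * V k j) = (if i = j then 1 else 0) \<and>
      (\<Sum>k<n. V i k * cnj (V j k)) = (if i = j then 1 else 0))"

definition dirac_gammas :: "(nat \<Rightarrow> nat \<Rightarrow> nat \<Rightarrow> complex) \<Rightarrow> bool" where
  "dirac_gammas \<gamma> \<longleftrightarrow>
     (\<forall>\<nu><4. \<forall>s<4. \<forall>t<4. \<gamma> \<nu> s t = cnj (\<gamma> \<nu> t s)) \<and>
     (\<forall>\<nu><4. \<forall>\<rho><4. \<forall>s<4. \<forall>t<4.
        (\<Sum>u<4. \<gamma> \<nu> s u * \<gamma> \<rho> u t + \<gamma> \<rho> s u * \<gamma> \<nu> u t)
          = (if \<nu> = \<rho> \<and> s = t then 2 else 0))"

definition gauge_field :: "(nat \<Rightarrow> nat) \<Rightarrow> nat \<Rightarrow> (nat \<Rightarrow> (nat \<Rightarrow> nat) \<Rightarrow> nat \<Rightarrow> nat \<Rightarrow> complex) \<Rightarrow> bool" where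
  "gauge_field L Nc U \<longleftrightarrow> (\<forall>x\<in>sites L. \<forall>\<nu><4. unitary_mat Nc (U \<nu> x))"

definition wilson_hop :: "(nat \<Rightarrow> nat) \<Rightarrow> real \<Rightarrow> (nat \<Rightarrow> nat \<Rightarrow> nat \<Rightarrow> complex)
    \<Rightarrow> (nat \<Rightarrow> (nat \<Rightarrow> nat) \<Rightarrow> nat \<Rightarrow> nat \<Rightarrow> complex) \<Rightarrow> idx \<Rightarrow> idx \<Rightarrow> complex" where
  "wilson_hop L \<kappa> \<gamma> U = (\<lambda>(x, s, c) (y, t, d). complex_of_real \<kappa> * (\<Sum>\<nu><4.
      (if y = fwd L \<nu> x then (idm s t - \<gamma> \<nu> s t) * U \<nu> x c d else 0)
    + (if y = bwd L \<nu> x then (idm s t + \<gamma> \<nu> s t) * cnj (U \<nu> (bwd L \<nu> x) d c) else 0)))"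

definition even_part :: "(nat \<Rightarrow> nat) \<Rightarrow> nat \<Rightarrow> nat \<Rightarrow> idx set" where
  "even_part L Nc \<mu> = {i \<in> indices L Nc. even (fst i \<mu>)}"

definition odd_part :: "(nat \<Rightarrow> nat) \<Rightarrow> nat \<Rightarrow> nat \<Rightarrow> idx set" where
  "odd_part L Nc \<mu> = {i \<in> indices L Nc. odd (fst i \<mu>)}"


definition geo_part :: "'i set \<Rightarrow> ('i \<Rightarrow> 'i \<Rightarrow> complex) \<Rightarrow> nat \<Rightarrow> 'i \<Rightarrow> 'i \<Rightarrow> complex" where
  "geo_part R M k = (\<lambda>i j. \<Sum>l<k. mat_pow R (blk R R M) l i j)"

definition geo_full :: "'i set \<Rightarrow> ('i \<Rightarrow> 'i \<Rightarrow> complex) \<Rightarrow> 'i \<Rightarrow> 'i \<Rightarrow> complex" where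
  "geo_full R M = (\<lambda>i j. \<Sum>l. mat_pow R (blk R R M) l i j)"

definition res_inv :: "'i set \<Rightarrow> ('i \<Rightarrow> 'i \<Rightarrow> complex) \<Rightarrow> 'i \<Rightarrow> 'i \<Rightarrow> complex" where
  "res_inv R M = inv_on R (\<lambda>i j. blk R R idm i j - blk R R M i j)"

definition eff_hop :: "'i set \<Rightarrow> 'i set \<Rightarrow> ('i \<Rightarrow> 'i \<Rightarrow> complex) \<Rightarrow> ('i \<Rightarrow> 'i \<Rightarrow> complex)
    \<Rightarrow> 'i \<Rightarrow> 'i \<Rightarrow> complex" where
  "eff_hop B R M P = (\<lambda>i j. blk B B M i j + mat_mult R (mat_mult R (blk B R M) P) (blk R B M) i j)"

definition schur :: "'i set \<Rightarrow> 'i set \<Rightarrow> ('i \<Rightarrow> 'i \<Rightarrow> complex) \<Rightarrow> 'i \<Rightarrow> 'i \<Rightarrow> complex" where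
  "schur B R M = (\<lambda>i j. blk B B idm i j - blk B B M i j
       - mat_mult R (mat_mult R (blk B R M) (res_inv R M)) (blk R B M) i j)"

definition schur_approx :: "'i set \<Rightarrow> 'i set \<Rightarrow> ('i \<Rightarrow> 'i \<Rightarrow> complex) \<Rightarrow> nat \<Rightarrow> 'i \<Rightarrow> 'i \<Rightarrow> complex" where
  "schur_approx B R M k = (\<lambda>i j. blk B B idm i j - eff_hop B R M (geo_part R M k) i j)"

end

theory Submission
  imports Defs "HOL-Analysis.L2_Norm"
begin

(* In direction nu the hopping term is kappa ((1 - gamma_nu) T + (1 + gamma_nu) T'), where T and
   T' are the covariant forward and backward shifts.  For a = T w and b = T' w the vectors
   (1 - gamma_nu) a and (1 + gamma_nu) b are orthogonal, gamma_nu being a self-adjoint involution,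
   and their squared norms add up to 2|a|^2 + 2|b|^2 - 2<a, gamma_nu a> + 2<b, gamma_nu b> = 4|w|^2,
   because T and T' are unitary and commute with gamma_nu.  So each direction has norm 2 kappa.
   As L_mu is even, hops in direction mu flip the parity of x_mu and all others preserve it;
   hence ||M_bb||, ||M_rr|| <= 6 kappa <= 3/4 and ||M_br||, ||M_rb|| <= 2 kappa <= 1/4.
   The rest is norm bookkeeping.  The Neumann series gives ||(I_r - M_rr)^-1|| <= 4, so the
   effective hopping term has norm <= 3/4 + 4/16 = 1 and its order-k truncation has norm
   <= 3/4 + (1 - (3/4)^k)/4 = 1 - q with q = (3/4)^k / 4.  The truncation error has norm
   <= 4 (3/4)^k / 16 = q, so I - S~^-1 S = S~^-1 (S~ - S) has norm <= (1/q) q = 1. *)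

section \<open>Vectors, kernels and operator bounds\<close>

abbreviation id_minus :: "'i set \<Rightarrow> ('i \<Rightarrow> 'i \<Rightarrow> complex) \<Rightarrow> 'i \<Rightarrow> 'i \<Rightarrow> complex" where
  "id_minus S A \<equiv> \<lambda>i j. blk S S idm i j - A i j"

lemma vnorm_eq_L2_set: "vnorm X v = L2_set (\<lambda>i. cmod (v i)) X"
  unfolding vnorm_def L2_set_def by simp

lemma vnorm_nonneg: "0 \<le> vnorm X v"
  unfolding vnorm_eq_L2_set by simp

lemma vnorm_zero: "vnorm X (\<lambda>i. 0) = 0"
  unfolding vnorm_def by simp

lemma vnorm_cong: "(\<And>i. i \<in> X \<Longrightarrow> u i = w i) \<Longrightarrow> vnorm X u = vnorm X w"
  unfolding vnorm_def by (simp cong: sum.cong)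

lemma vnorm_add_le: "vnorm X (\<lambda>i. u i + w i) \<le> vnorm X u + vnorm X w"
proof -
  have "vnorm X (\<lambda>i. u i + w i) \<le> L2_set (\<lambda>i. cmod (u i) + cmod (w i)) X"
    unfolding vnorm_eq_L2_set by (rule L2_set_mono) (auto simp: norm_triangle_ineq)
  also have "\<dots> \<le> vnorm X u + vnorm X w"
    unfolding vnorm_eq_L2_set by (rule L2_set_triangle_ineq)
  finally show ?thesis .
qed

lemma vnorm_sum_le: "vnorm X (\<lambda>i. \<Sum>\<nu>\<in>F. f \<nu> i) \<le> (\<Sum>\<nu>\<in>F. vnorm X (f \<nu>))"
proof (induction F rule: infinite_finite_induct)
  case (insert \<nu> F)
  have "vnorm X (\<lambda>i. \<Sum>\<nu>'\<in>insert \<nu> F. f \<nu>' i) = vnorm X (\<lambda>i. f \<nu> i + (\<Sum>\<nu>'\<in>F. f \<nu>' i))"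
    using insert by simp
  also have "\<dots> \<le> vnorm X (f \<nu>) + vnorm X (\<lambda>i. \<Sum>\<nu>'\<in>F. f \<nu>' i)" by (rule vnorm_add_le)
  finally show ?case using insert by simp
qed (simp_all add: vnorm_zero)

lemma vnorm_mono_set: "finite Y \<Longrightarrow> X \<subseteq> Y \<Longrightarrow> vnorm X u \<le> vnorm Y u"
  unfolding vnorm_def by (intro real_sqrt_le_mono sum_mono2) auto

lemma norm_le_vnorm: "finite X \<Longrightarrow> i \<in> X \<Longrightarrow> cmod (u i) \<le> vnorm X u"
  unfolding vnorm_eq_L2_set by (rule member_le_L2_set)

lemma vnorm_delta: "finite Y \<Longrightarrow> j \<in> Y \<Longrightarrow> vnorm Y (\<lambda>k. idm k j) = 1"
  unfolding vnorm_def idm_def by (simp add: if_distrib[where f = "\<lambda>z. (cmod z)\<^sup>2"] cong: if_cong)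

lemma sum_idm_mult: "finite S \<Longrightarrow> (\<Sum>k\<in>S. idm i k * f k) = (if i \<in> S then f i else 0)"
  unfolding idm_def of_bool_def[symmetric] by simp

lemma sum_mult_idm: "finite S \<Longrightarrow> (\<Sum>k\<in>S. f k * idm k j) = (if j \<in> S then f j else 0)"
  unfolding idm_def of_bool_def[symmetric] by simp

lemma mat_apply_mat_mult: "mat_apply Z (mat_mult Y A B) v = mat_apply Y A (mat_apply Z B v)"
  unfolding mat_apply_def mat_mult_def
  by (auto simp: sum_distrib_left sum_distrib_right mult.assoc intro!: ext sum.swap)

lemma mat_apply_add: "mat_apply Y (\<lambda>i j. A i j + B i j) v = (\<lambda>i. mat_apply Y A v i + mat_apply Y B v i)"
  unfolding mat_apply_def by (simp add: ring_distribs sum.distrib)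

lemma mat_apply_id_minus: "finite S \<Longrightarrow> i \<in> S \<Longrightarrow>
    mat_apply S (id_minus S A) v i = v i - mat_apply S A v i"
  unfolding mat_apply_def blk_def using sum_idm_mult[of S i v]
  by (simp add: left_diff_distrib sum_subtractf)

lemma mat_apply_id: "finite S \<Longrightarrow> i \<in> S \<Longrightarrow> mat_apply S (blk S S idm) v i = v i"
  unfolding mat_apply_def blk_def using sum_idm_mult[of S i v] by simp

lemma mat_mult_assoc: "mat_mult S (mat_mult S A B) C = mat_mult S A (mat_mult S B C)"
  unfolding mat_mult_def
  by (auto simp: sum_distrib_left sum_distrib_right mult.assoc intro!: ext sum.swap)

lemma mat_mult_id_left: "finite S \<Longrightarrow> i \<in> S \<Longrightarrow> mat_mult S (blk S S idm) A i j = A i j"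
  unfolding mat_mult_def blk_def using sum_idm_mult[of S i "\<lambda>k. A k j"] by simp

lemma mat_mult_id_right: "finite S \<Longrightarrow> j \<in> S \<Longrightarrow> mat_mult S A (blk S S idm) i j = A i j"
  unfolding mat_mult_def blk_def using sum_mult_idm[of S "A i" j] by simp

lemma mat_mult_idm_left: "finite S \<Longrightarrow> i \<in> S \<Longrightarrow> mat_mult S idm A i j = A i j"
  unfolding mat_mult_def using sum_idm_mult[of S i "\<lambda>k. A k j"] by simp

lemma mat_mult_idm_right: "finite S \<Longrightarrow> j \<in> S \<Longrightarrow> mat_mult S A idm i j = A i j"
  unfolding mat_mult_def using sum_mult_idm[of S "A i" j] by simp

lemma mat_mult_diff_left:
  "mat_mult S (\<lambda>i j. A i j - B i j) C i j = mat_mult S A C i j - mat_mult S B C i j"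
  unfolding mat_mult_def by (simp add: ring_distribs sum_subtractf)

lemma mat_mult_diff_right:
  "mat_mult S A (\<lambda>i j. B i j - C i j) i j = mat_mult S A B i j - mat_mult S A C i j"
  unfolding mat_mult_def by (simp add: ring_distribs sum_subtractf)

lemma mat_mult_sum_right:
  "mat_mult S A (\<lambda>i j. \<Sum>l\<in>F. P l i j) i j = (\<Sum>l\<in>F. mat_mult S A (P l) i j)"
  unfolding mat_mult_def by (simp add: sum_distrib_left sum.swap[of _ S F])

lemma mat_mult_cong_left:
  "(\<And>k. k \<in> S \<Longrightarrow> A i k = C i k) \<Longrightarrow> mat_mult S A B i j = mat_mult S C B i j"
  unfolding mat_mult_def by simp

lemma mat_mult_cong_right:
  "(\<And>k. k \<in> S \<Longrightarrow> B k j = C k j) \<Longrightarrow> mat_mult S A B i j = mat_mult S A C i j"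
  unfolding mat_mult_def by simp

lemma id_minus_mult: "finite S \<Longrightarrow> i \<in> S \<Longrightarrow>
    mat_mult S (id_minus S A) P i j = P i j - mat_mult S A P i j"
  by (simp add: mat_mult_diff_left mat_mult_id_left)

lemma mult_id_minus: "finite S \<Longrightarrow> j \<in> S \<Longrightarrow>
    mat_mult S P (id_minus S A) i j = P i j - mat_mult S P A i j"
  by (simp add: mat_mult_diff_right mat_mult_id_right)

lemma mat_pow_Suc_right:
  assumes "finite S" "i \<in> S" "j \<in> S"
  shows "mat_mult S (mat_pow S A l) A i j = mat_pow S A (Suc l) i j"
  using assms(2,3)
proof (induction l arbitrary: i j)
  case 0
  then show ?case using assms(1) by (simp add: mat_mult_id_left mat_mult_id_right)
next
  case (Suc l)
  have "mat_mult S (mat_pow S A (Suc l)) A i j = mat_mult S A (mat_mult S (mat_pow S A l) A) i j"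
    by (simp add: mat_mult_assoc)
  also have "\<dots> = mat_mult S A (mat_pow S A (Suc l)) i j"
    using Suc.IH Suc.prems by (intro mat_mult_cong_right) auto
  finally show ?case by simp
qed

definition op_bounded :: "'i set \<Rightarrow> 'i set \<Rightarrow> ('i \<Rightarrow> 'i \<Rightarrow> complex) \<Rightarrow> real \<Rightarrow> bool" where
  "op_bounded X Y A c \<longleftrightarrow> (\<forall>v. vnorm X (mat_apply Y A v) \<le> c * vnorm Y v)"

lemma opnorm_le: assumes "op_bounded X Y A c" "0 \<le> c" shows "opnorm X Y A \<le> c"
  unfolding opnorm_def
proof (rule cSup_least)
  have "(\<lambda>v. 0) \<in> {v. vnorm Y v \<le> 1}" using vnorm_zero[of Y] by simp
  then show "(\<lambda>v. vnorm X (mat_apply Y A v)) ` {v. vnorm Y v \<le> 1} \<noteq> {}" by blast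
next
  fix x assume "x \<in> (\<lambda>v. vnorm X (mat_apply Y A v)) ` {v. vnorm Y v \<le> 1}"
  then obtain v where v: "vnorm Y v \<le> 1" "x = vnorm X (mat_apply Y A v)" by auto
  have "x \<le> c * vnorm Y v" using assms(1) v unfolding op_bounded_def by auto
  also have "\<dots> \<le> c" using v assms(2) by (simp add: mult_left_le)
  finally show "x \<le> c" .
qed

lemma op_bounded_mono: "op_bounded X Y A c \<Longrightarrow> c \<le> d \<Longrightarrow> op_bounded X Y A d"
  unfolding op_bounded_def by (meson mult_right_mono order_trans vnorm_nonneg)

lemma op_bounded_cong:
  assumes "\<And>i j. i \<in> X \<Longrightarrow> j \<in> Y \<Longrightarrow> A i j = B i j" "op_bounded X Y A c"
  shows "op_bounded X Y B c"
proof -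
  have "vnorm X (mat_apply Y B v) = vnorm X (mat_apply Y A v)" for v
    by (rule vnorm_cong) (simp add: mat_apply_def assms(1))
  then show ?thesis using assms(2) unfolding op_bounded_def by simp
qed

lemma op_bounded_mult:
  assumes "op_bounded X Y A a" "op_bounded Y Z B b" "0 \<le> a"
  shows "op_bounded X Z (mat_mult Y A B) (a * b)"
  unfolding op_bounded_def mat_apply_mat_mult
proof
  fix v
  have "vnorm X (mat_apply Y A (mat_apply Z B v)) \<le> a * vnorm Y (mat_apply Z B v)"
    using assms(1) unfolding op_bounded_def by auto
  also have "\<dots> \<le> a * (b * vnorm Z v)"
    using assms(2,3) unfolding op_bounded_def by (simp add: mult_left_mono)
  finally show "vnorm X (mat_apply Y A (mat_apply Z B v)) \<le> a * b * vnorm Z v" by simp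
qed

lemma op_bounded_add:
  assumes "op_bounded X Y A a" "op_bounded X Y B b"
  shows "op_bounded X Y (\<lambda>i j. A i j + B i j) (a + b)"
  unfolding op_bounded_def mat_apply_add
proof
  fix v
  have "vnorm X (\<lambda>i. mat_apply Y A v i + mat_apply Y B v i)
     \<le> vnorm X (mat_apply Y A v) + vnorm X (mat_apply Y B v)" by (rule vnorm_add_le)
  also have "\<dots> \<le> a * vnorm Y v + b * vnorm Y v"
    using assms unfolding op_bounded_def by (meson add_mono)
  finally show "vnorm X (\<lambda>i. mat_apply Y A v i + mat_apply Y B v i) \<le> (a + b) * vnorm Y v"
    by (simp add: ring_distribs)
qed

lemma op_bounded_sum:
  "(\<And>l. l \<in> F \<Longrightarrow> op_bounded X Y (P l) (c l)) \<Longrightarrow>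
    op_bounded X Y (\<lambda>i j. \<Sum>l\<in>F. P l i j) (\<Sum>l\<in>F. c l)"
proof (induction F rule: infinite_finite_induct)
  case (insert l F)
  then show ?case by (simp add: op_bounded_add)
qed (simp_all add: op_bounded_def mat_apply_def vnorm_zero)

lemma op_bounded_id: "finite S \<Longrightarrow> op_bounded S S (blk S S idm) 1"
  unfolding op_bounded_def by (simp add: mat_apply_id cong: vnorm_cong)

lemma op_bounded_pow:
  "finite S \<Longrightarrow> op_bounded S S A a \<Longrightarrow> 0 \<le> a \<Longrightarrow> op_bounded S S (mat_pow S A l) (a ^ l)"
  by (induction l) (auto simp: op_bounded_id intro: op_bounded_mult)

lemma op_bounded_entry:
  assumes "op_bounded X Y A c" "finite X" "finite Y" "i \<in> X" "j \<in> Y"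
  shows "cmod (A i j) \<le> c"
proof -
  have "A i j = mat_apply Y A (\<lambda>k. idm k j) i"
    unfolding mat_apply_def using assms(3,5) sum_mult_idm[of Y "A i" j] by simp
  also have "cmod \<dots> \<le> vnorm X (mat_apply Y A (\<lambda>k. idm k j))"
    by (rule norm_le_vnorm[OF assms(2,4)])
  also have "\<dots> \<le> c"
    using assms(1) vnorm_delta[OF assms(3,5)] unfolding op_bounded_def by (metis mult.right_neutral)
  finally show ?thesis .
qed

section \<open>Inverses and the Neumann series\<close>

lemma inverse_unique:
  assumes S: "finite S" and ij: "i \<in> S" "j \<in> S"
    and right: "\<forall>i\<in>S. \<forall>j\<in>S. mat_mult S X B i j = idm i j"
    and left: "\<forall>i\<in>S. \<forall>j\<in>S. mat_mult S C X i j = idm i j"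
  shows "C i j = B i j"
proof -
  have "C i j = mat_mult S C idm i j" using S ij by (simp add: mat_mult_idm_right)
  also have "\<dots> = mat_mult S C (mat_mult S X B) i j"
    using right ij by (intro mat_mult_cong_right) auto
  also have "\<dots> = mat_mult S (mat_mult S C X) B i j" by (simp add: mat_mult_assoc)
  also have "\<dots> = mat_mult S idm B i j"
    using left ij by (intro mat_mult_cong_left) auto
  also have "\<dots> = B i j" using S ij by (simp add: mat_mult_idm_left)
  finally show ?thesis .
qed

lemma inv_on_eqI:
  assumes S: "finite S"
    and G: "\<forall>i\<in>S. \<forall>j\<in>S. mat_mult S X G i j = idm i j \<and> mat_mult S G X i j = idm i j"
  shows "invertible_on S X" and "\<forall>i\<in>S. \<forall>j\<in>S. inv_on S X i j = G i j"
proof -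
  show "invertible_on S X" unfolding invertible_on_def using G by blast
  define B where "B = (SOME B. \<forall>i\<in>S. \<forall>j\<in>S. mat_mult S X B i j = idm i j \<and> mat_mult S B X i j = idm i j)"
  have "\<forall>i\<in>S. \<forall>j\<in>S. mat_mult S X B i j = idm i j \<and> mat_mult S B X i j = idm i j"
    unfolding B_def by (rule someI[of _ G]) (use G in blast)
  then have "\<forall>i\<in>S. \<forall>j\<in>S. G i j = B i j"
    using inverse_unique[OF S] G by blast
  then show "\<forall>i\<in>S. \<forall>j\<in>S. inv_on S X i j = G i j"
    unfolding inv_on_def B_def[symmetric] blk_def by simp
qed

definition neumann_series :: "'i set \<Rightarrow> ('i \<Rightarrow> 'i \<Rightarrow> complex) \<Rightarrow> 'i \<Rightarrow> 'i \<Rightarrow> complex" where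
  "neumann_series S A = (\<lambda>i j. \<Sum>l. mat_pow S A l i j)"

lemma sums_neumann_series:
  assumes S: "finite S" and A: "op_bounded S S A a" "0 \<le> a" "a < 1" and ij: "i \<in> S" "j \<in> S"
  shows "(\<lambda>l. mat_pow S A l i j) sums neumann_series S A i j"
proof -
  have "cmod (mat_pow S A l i j) \<le> a ^ l" for l
    using op_bounded_entry[OF op_bounded_pow[OF S A(1,2)] S S ij] .
  then have "summable (\<lambda>l. mat_pow S A l i j)"
    by (intro summable_comparison_test'[where N = 0, OF summable_geometric[of a]]) (use A in auto)
  then show ?thesis unfolding neumann_series_def by (simp add: summable_sums)
qed

lemma sums_mat_mult_left:
  "(\<And>k. k \<in> S \<Longrightarrow> (\<lambda>l. P l k j) sums Q k j) \<Longrightarrow>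
    (\<lambda>l. mat_mult S C (P l) i j) sums mat_mult S C Q i j"
  unfolding mat_mult_def by (rule sums_sum) (auto intro: sums_mult)

lemma sums_mat_mult_right:
  "(\<And>k. k \<in> S \<Longrightarrow> (\<lambda>l. P l i k) sums Q i k) \<Longrightarrow>
    (\<lambda>l. mat_mult S (P l) C i j) sums mat_mult S Q C i j"
  unfolding mat_mult_def by (rule sums_sum) (auto intro: sums_mult2)

lemma neumann_series_inverse:
  assumes S: "finite S" and A: "op_bounded S S A a" "0 \<le> a" "a < 1"
  shows "\<forall>i\<in>S. \<forall>j\<in>S. mat_mult S (id_minus S A) (neumann_series S A) i j = idm i j
                    \<and> mat_mult S (neumann_series S A) (id_minus S A) i j = idm i j"
proof (intro ballI conjI)
  fix i j assume ij: "i \<in> S" "j \<in> S"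
  note sums = sums_neumann_series[OF S A]
  have "(\<lambda>l. mat_pow S A l i j) \<longlonglongrightarrow> 0"
    using summable_LIMSEQ_zero[OF sums_summable[OF sums[OF ij]]] .
  then have telescope: "(\<lambda>l. mat_pow S A l i j - mat_pow S A (Suc l) i j) sums idm i j"
    using telescope_sums' ij by (fastforce simp: blk_def)
  have "(\<lambda>l. mat_pow S A l i j - mat_pow S A (Suc l) i j)
      sums mat_mult S (id_minus S A) (neumann_series S A) i j"
    using sums_mat_mult_left[of S "mat_pow S A" j "neumann_series S A" "id_minus S A" i] sums ij S
    by (simp add: id_minus_mult)
  then show "mat_mult S (id_minus S A) (neumann_series S A) i j = idm i j"
    using telescope sums_unique2 by blast
  have "(\<lambda>l. mat_pow S A l i j - mat_pow S A (Suc l) i j)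
      sums mat_mult S (neumann_series S A) (id_minus S A) i j"
    using sums_mat_mult_right[of S "mat_pow S A" i "neumann_series S A" "id_minus S A" j] sums ij S
    by (simp add: mult_id_minus mat_pow_Suc_right)
  then show "mat_mult S (neumann_series S A) (id_minus S A) i j = idm i j"
    using telescope sums_unique2 by blast
qed

lemma op_bounded_right_inverse:
  assumes S: "finite S" and A: "op_bounded S S A a" "a < 1"
    and G: "\<forall>i\<in>S. \<forall>j\<in>S. mat_mult S (id_minus S A) G i j = idm i j"
  shows "op_bounded S S G (1 / (1 - a))"
  unfolding op_bounded_def
proof
  fix w
  define u where "u = mat_apply S G w"
  have w: "w i = u i - mat_apply S A u i" if i: "i \<in> S" for i
  proof -
    have "u i - mat_apply S A u i = mat_apply S (mat_mult S (id_minus S A) G) w i"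
      unfolding u_def mat_apply_mat_mult using S i by (simp add: mat_apply_id_minus)
    also have "\<dots> = (\<Sum>j\<in>S. idm i j * w j)" unfolding mat_apply_def using G i by simp
    also have "\<dots> = w i" using S i by (simp add: sum_idm_mult)
    finally show ?thesis by simp
  qed
  have "vnorm S u = vnorm S (\<lambda>i. w i + mat_apply S A u i)"
    by (rule vnorm_cong) (simp add: w)
  also have "\<dots> \<le> vnorm S w + vnorm S (mat_apply S A u)" by (rule vnorm_add_le)
  also have "\<dots> \<le> vnorm S w + a * vnorm S u" using A unfolding op_bounded_def by auto
  finally show "vnorm S (mat_apply S G w) \<le> 1 / (1 - a) * vnorm S w"
    using A(2) unfolding u_def by (simp add: field_simps)
qed

lemma id_minus_mult_geometric_sum:
  assumes "finite S" "i \<in> S"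
  shows "mat_mult S (id_minus S A) (\<lambda>i j. \<Sum>l<k. mat_pow S A l i j) i j
       = blk S S idm i j - mat_pow S A k i j"
proof -
  have "mat_mult S (id_minus S A) (\<lambda>i j. \<Sum>l<k. mat_pow S A l i j) i j
      = (\<Sum>l<k. mat_pow S A l i j - mat_pow S A (Suc l) i j)"
    using assms by (simp add: id_minus_mult mat_mult_sum_right sum_subtractf)
  also have "\<dots> = mat_pow S A 0 i j - mat_pow S A k i j" by (rule sum_lessThan_telescope')
  finally show ?thesis by simp
qed

lemma geometric_sum_tail:
  assumes S: "finite S" and ij: "i \<in> S" "j \<in> S"
    and G: "\<forall>i\<in>S. \<forall>j\<in>S. mat_mult S G (id_minus S A) i j = idm i j"
  shows "G i j - (\<Sum>l<k. mat_pow S A l i j) = mat_mult S G (mat_pow S A k) i j"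
proof -
  let ?Gk = "\<lambda>i j. \<Sum>l<k. mat_pow S A l i j"
  have "?Gk i j = mat_mult S idm ?Gk i j" using S ij by (simp add: mat_mult_idm_left)
  also have "\<dots> = mat_mult S (mat_mult S G (id_minus S A)) ?Gk i j"
    using G ij by (intro mat_mult_cong_left) auto
  also have "\<dots> = mat_mult S G (mat_mult S (id_minus S A) ?Gk) i j" by (simp add: mat_mult_assoc)
  also have "\<dots> = mat_mult S G (\<lambda>i j. blk S S idm i j - mat_pow S A k i j) i j"
    using S by (intro mat_mult_cong_right) (simp add: id_minus_mult_geometric_sum)
  also have "\<dots> = G i j - mat_mult S G (mat_pow S A k) i j"
    using S ij by (simp add: mat_mult_diff_right mat_mult_id_right)
  finally show ?thesis by simp
qed

lemma weak_regularity:
  assumes S: "finite S" and q: "0 < q" "q \<le> 1"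
    and A: "op_bounded S S A (1 - q)" and D: "op_bounded S S (\<lambda>i j. A' i j - A i j) q"
  shows "invertible_on S (id_minus S A)"
    and "op_bounded S S (\<lambda>i j. blk S S idm i j
           - mat_mult S (inv_on S (id_minus S A)) (id_minus S A') i j) 1"
proof -
  let ?H = "neumann_series S A" and ?D = "\<lambda>i j. A' i j - A i j"
  have inv: "\<forall>i\<in>S. \<forall>j\<in>S. mat_mult S (id_minus S A) ?H i j = idm i j
      \<and> mat_mult S ?H (id_minus S A) i j = idm i j"
    by (rule neumann_series_inverse[OF S A]) (use q in auto)
  then show "invertible_on S (id_minus S A)" using inv_on_eqI(1)[OF S] by blast
  have H: "op_bounded S S ?H (1 / q)"
    using op_bounded_right_inverse[OF S A] inv q by simp
  have entry_eq: "blk S S idm i j - mat_mult S (inv_on S (id_minus S A)) (id_minus S A') i j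
      = mat_mult S ?H ?D i j" if ij: "i \<in> S" "j \<in> S" for i j
  proof -
    have HI: "mat_mult S ?H (id_minus S A) i j = idm i j" using inv ij by blast
    have "mat_mult S (inv_on S (id_minus S A)) (id_minus S A') i j
        = mat_mult S ?H (id_minus S A') i j"
      using inv_on_eqI(2)[OF S inv] ij by (intro mat_mult_cong_left) auto
    also have "\<dots> = mat_mult S ?H (\<lambda>i j. id_minus S A i j - ?D i j) i j"
      by (rule mat_mult_cong_right) simp
    also have "\<dots> = idm i j - mat_mult S ?H ?D i j"
      by (simp only: mat_mult_diff_right[of S ?H "id_minus S A" ?D i j] HI)
    finally show ?thesis using ij by (simp add: blk_def)
  qed
  have HD: "op_bounded S S (mat_mult S ?H ?D) 1"
    using op_bounded_mult[OF H D] q by simp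
  show "op_bounded S S (\<lambda>i j. blk S S idm i j
           - mat_mult S (inv_on S (id_minus S A)) (id_minus S A') i j) 1"
    by (rule op_bounded_cong[OF _ HD]) (simp only: entry_eq)
qed

section \<open>The Schur complement of an operator with small blocks\<close>

lemma eff_hop_cong:
  "(\<And>i j. i \<in> R \<Longrightarrow> j \<in> R \<Longrightarrow> P i j = P' i j) \<Longrightarrow> eff_hop B R M P = eff_hop B R M P'"
  unfolding eff_hop_def mat_mult_def by (intro ext) (simp cong: sum.cong)

lemma eff_hop_diff:
  "eff_hop B R M P i j - eff_hop B R M P' i j
     = mat_mult R (mat_mult R (blk B R M) (\<lambda>i j. P i j - P' i j)) (blk R B M) i j"
proof -
  have "mat_mult R (blk B R M) (\<lambda>i j. P i j - P' i j)
     = (\<lambda>i j. mat_mult R (blk B R M) P i j - mat_mult R (blk B R M) P' i j)"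
    by (intro ext) (rule mat_mult_diff_right)
  then show ?thesis unfolding eff_hop_def by (simp add: mat_mult_diff_left)
qed

lemma op_bounded_eff_hop:
  assumes "op_bounded B B (blk B B M) b" "op_bounded B R (blk B R M) c"
    and "op_bounded R B (blk R B M) c'" "op_bounded R R P p" "0 \<le> c" "0 \<le> p"
  shows "op_bounded B B (eff_hop B R M P) (b + c * p * c')"
  unfolding eff_hop_def by (intro op_bounded_add op_bounded_mult assms) (use assms in auto)

lemma schur_eq_id_minus_eff_hop:
  assumes "\<forall>i\<in>R. \<forall>j\<in>R. res_inv R M i j = G i j"
  shows "schur B R M = id_minus B (eff_hop B R M G)"
proof -
  have "eff_hop B R M (res_inv R M) = eff_hop B R M G" using assms by (intro eff_hop_cong) auto
  then show ?thesis unfolding schur_def eff_hop_def by (simp add: fun_eq_iff diff_diff_eq)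
qed

lemma nonneg_on_id_minus: "opnorm S S N \<le> 1 \<Longrightarrow> nonneg_on S (id_minus S N)"
  unfolding nonneg_on_def blk_def by auto

context
  fixes B R :: "'i set" and M :: "'i \<Rightarrow> 'i \<Rightarrow> complex"
  assumes finB: "finite B" and finR: "finite R"
    and bb: "op_bounded B B (blk B B M) (3/4)" and rr: "op_bounded R R (blk R R M) (3/4)"
    and br: "op_bounded B R (blk B R M) (1/4)" and rb: "op_bounded R B (blk R B M) (1/4)"
begin

lemma geo_full_inverse:
  "\<forall>i\<in>R. \<forall>j\<in>R. mat_mult R (id_minus R (blk R R M)) (geo_full R M) i j = idm i j
               \<and> mat_mult R (geo_full R M) (id_minus R (blk R R M)) i j = idm i j"
  using neumann_series_inverse[OF finR rr] unfolding geo_full_def neumann_series_def by simp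

lemma res_inv_eq_geo_full:
  shows "invertible_on R (id_minus R (blk R R M))"
    and "\<forall>i\<in>R. \<forall>j\<in>R. res_inv R M i j = geo_full R M i j"
  using inv_on_eqI[OF finR geo_full_inverse] unfolding res_inv_def by auto

lemma sums_res_inv: "\<forall>i\<in>R. \<forall>j\<in>R. (\<lambda>l. mat_pow R (blk R R M) l i j) sums res_inv R M i j"
  using sums_neumann_series[OF finR rr] res_inv_eq_geo_full(2)
  unfolding geo_full_def neumann_series_def by simp

lemma op_bounded_geo_full: "op_bounded R R (geo_full R M) 4"
  using op_bounded_right_inverse[OF finR rr] geo_full_inverse by simp

lemma op_bounded_geo_part: "op_bounded R R (geo_part R M k) (4 * (1 - (3/4) ^ k))"
proof -
  have "op_bounded R R (geo_part R M k) (\<Sum>l<k. (3/4) ^ l)"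
    unfolding geo_part_def by (intro op_bounded_sum op_bounded_pow[OF finR rr]) simp
  moreover have "(\<Sum>l<k. (3/4::real) ^ l) = 4 * (1 - (3/4) ^ k)" by (simp add: sum_gp_strict)
  ultimately show ?thesis by simp
qed

lemma op_bounded_geo_tail:
  "op_bounded R R (\<lambda>i j. geo_full R M i j - geo_part R M k i j) (4 * (3/4) ^ k)"
proof (rule op_bounded_cong)
  show "op_bounded R R (mat_mult R (geo_full R M) (mat_pow R (blk R R M) k)) (4 * (3/4) ^ k)"
    by (intro op_bounded_mult op_bounded_geo_full op_bounded_pow[OF finR rr]) auto
  show "mat_mult R (geo_full R M) (mat_pow R (blk R R M) k) i j = geo_full R M i j - geo_part R M k i j"
    if "i \<in> R" "j \<in> R" for i j
    using geometric_sum_tail[OF finR that] geo_full_inverse unfolding geo_part_def by simp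
qed

lemma op_bounded_eff_hop_geo_full: "op_bounded B B (eff_hop B R M (geo_full R M)) 1"
  using op_bounded_eff_hop[OF bb br rb op_bounded_geo_full] by simp

lemma op_bounded_eff_hop_geo_part:
  "op_bounded B B (eff_hop B R M (geo_part R M k)) (1 - 1/4 * (3/4) ^ k)"
proof -
  have le1: "(3/4::real) ^ k \<le> 1" by (rule power_le_one) auto
  have "op_bounded B B (eff_hop B R M (geo_part R M k)) (3/4 + 1/4 * (4 * (1 - (3/4) ^ k)) * (1/4))"
    by (intro op_bounded_eff_hop[OF bb br rb op_bounded_geo_part]) (use le1 in auto)
  then show ?thesis by (simp add: algebra_simps)
qed

lemma op_bounded_truncation_error:
  "op_bounded B B (\<lambda>i j. eff_hop B R M (geo_full R M) i j - eff_hop B R M (geo_part R M k) i j)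
     (1/4 * (3/4) ^ k)"
  unfolding eff_hop_diff
  by (rule op_bounded_mono[OF op_bounded_mult[OF op_bounded_mult[OF br op_bounded_geo_tail] rb]]) auto

lemma schur_approx_bounds:
  "nonneg_on B (schur_approx B R M k)
    \<and> opnorm B B (eff_hop B R M (geo_part R M k)) \<le> 1 - 1/4 * (3/4) ^ k
    \<and> invertible_on B (schur_approx B R M k)
    \<and> opnorm B B (id_minus B (mat_mult B (inv_on B (schur_approx B R M k)) (schur B R M))) \<le> 1"
proof -
  have "(3/4::real) ^ k \<le> 1" by (rule power_le_one) auto
  then have q: "0 < 1/4 * (3/4::real) ^ k" "1/4 * (3/4::real) ^ k \<le> 1" by auto
  have opnorm_part: "opnorm B B (eff_hop B R M (geo_part R M k)) \<le> 1 - 1/4 * (3/4) ^ k"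
    by (rule opnorm_le[OF op_bounded_eff_hop_geo_part]) (use q in simp)
  note regular = weak_regularity[OF finB q op_bounded_eff_hop_geo_part op_bounded_truncation_error]
  have "nonneg_on B (schur_approx B R M k)"
    unfolding schur_approx_def using opnorm_part q by (intro nonneg_on_id_minus) linarith
  then show ?thesis
    unfolding schur_approx_def schur_eq_id_minus_eff_hop[OF res_inv_eq_geo_full(2)]
    using opnorm_part regular(1) opnorm_le[OF regular(2)] by auto
qed

lemma schur_complement_bounds:
  "opnorm R R (blk R R M) < 1
    \<and> invertible_on R (id_minus R (blk R R M))
    \<and> (\<forall>i\<in>R. \<forall>j\<in>R. (\<lambda>l. mat_pow R (blk R R M) l i j) sums res_inv R M i j)
    \<and> nonneg_on B (schur B R M)
    \<and> opnorm B B (eff_hop B R M (geo_full R M)) \<le> 1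
    \<and> (\<forall>k\<ge>1. nonneg_on B (schur_approx B R M k)
         \<and> opnorm B B (eff_hop B R M (geo_part R M k)) \<le> 1 - 1/4 * (3/4) ^ k
         \<and> invertible_on B (schur_approx B R M k)
         \<and> opnorm B B (id_minus B (mat_mult B (inv_on B (schur_approx B R M k)) (schur B R M))) \<le> 1)"
proof -
  have "opnorm R R (blk R R M) \<le> 3/4" by (rule opnorm_le[OF rr]) simp
  moreover have "opnorm B B (eff_hop B R M (geo_full R M)) \<le> 1"
    by (rule opnorm_le[OF op_bounded_eff_hop_geo_full]) simp
  moreover have "nonneg_on B (schur B R M)"
    unfolding schur_eq_id_minus_eff_hop[OF res_inv_eq_geo_full(2)]
    by (rule nonneg_on_id_minus) fact
  ultimately show ?thesis
    using res_inv_eq_geo_full(1) sums_res_inv schur_approx_bounds by auto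
qed

end

section \<open>The periodic lattice\<close>

lemma finite_sites: "finite (sites L)"
proof (rule finite_subset)
  let ?m = "\<Sum>\<nu><4. L \<nu>"
  have "x \<nu> < ?m" if "x \<in> sites L" "\<nu> < 4" for x \<nu>
  proof -
    have "x \<nu> < L \<nu>" using that unfolding sites_def by auto
    also have "L \<nu> \<le> ?m" using that(2) by (intro member_le_sum) auto
    finally show ?thesis .
  qed
  then show "sites L \<subseteq> {x. \<forall>\<nu>. (\<nu> \<in> {..<4} \<longrightarrow> x \<nu> \<in> {..<?m}) \<and> (\<nu> \<notin> {..<4} \<longrightarrow> x \<nu> = 0)}"
    by (auto simp: sites_def)
  show "finite {x. \<forall>\<nu>. (\<nu> \<in> {..<4::nat} \<longrightarrow> x \<nu> \<in> {..<?m}) \<and> (\<nu> \<notin> {..<4} \<longrightarrow> x \<nu> = (0::nat))}"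
    by (rule finite_set_of_finite_funs) auto
qed

lemma finite_indices: "finite (indices L Nc)"
  unfolding indices_def by (simp add: finite_sites)

lemma fwd_in_sites: "\<nu> < 4 \<Longrightarrow> 0 < L \<nu> \<Longrightarrow> x \<in> sites L \<Longrightarrow> fwd L \<nu> x \<in> sites L"
  unfolding sites_def fwd_def by auto

lemma bwd_in_sites: "\<nu> < 4 \<Longrightarrow> 0 < L \<nu> \<Longrightarrow> x \<in> sites L \<Longrightarrow> bwd L \<nu> x \<in> sites L"
  unfolding sites_def bwd_def by auto

lemma bwd_fwd: assumes "\<nu> < 4" "x \<in> sites L" shows "bwd L \<nu> (fwd L \<nu> x) = x"
proof -
  have "x \<nu> < L \<nu>" using assms unfolding sites_def by auto
  then have "((x \<nu> + 1) mod L \<nu> + L \<nu> - 1) mod L \<nu> = x \<nu>" by (cases "x \<nu> + 1 = L \<nu>") auto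
  then show ?thesis unfolding bwd_def fwd_def by simp
qed

lemma fwd_bwd: assumes "\<nu> < 4" "x \<in> sites L" shows "fwd L \<nu> (bwd L \<nu> x) = x"
proof -
  have "x \<nu> < L \<nu>" using assms unfolding sites_def by auto
  then have "((x \<nu> + L \<nu> - 1) mod L \<nu> + 1) mod L \<nu> = x \<nu>" by (cases "x \<nu>") auto
  then show ?thesis unfolding bwd_def fwd_def by simp
qed

lemma bij_betw_fwd: "\<nu> < 4 \<Longrightarrow> 0 < L \<nu> \<Longrightarrow> bij_betw (fwd L \<nu>) (sites L) (sites L)"
  by (rule bij_betw_byWitness[where f' = "bwd L \<nu>"]) (auto simp: fwd_in_sites bwd_in_sites bwd_fwd fwd_bwd)

lemma bij_betw_bwd: "\<nu> < 4 \<Longrightarrow> 0 < L \<nu> \<Longrightarrow> bij_betw (bwd L \<nu>) (sites L) (sites L)"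
  by (rule bij_betw_byWitness[where f' = "fwd L \<nu>"]) (auto simp: fwd_in_sites bwd_in_sites bwd_fwd fwd_bwd)

lemma fwd_apply_other [simp]: "\<nu> \<noteq> \<mu> \<Longrightarrow> fwd L \<nu> x \<mu> = x \<mu>"
  unfolding fwd_def by simp

lemma bwd_apply_other [simp]: "\<nu> \<noteq> \<mu> \<Longrightarrow> bwd L \<nu> x \<mu> = x \<mu>"
  unfolding bwd_def by simp

lemma even_mod_even_iff: "even (m::nat) \<Longrightarrow> even (n mod m) \<longleftrightarrow> even n"
  by (simp add: even_iff_mod_2_eq_zero mod_mod_cancel)

lemma even_fwd_iff: "even (L \<mu>) \<Longrightarrow> even (fwd L \<mu> x \<mu>) \<longleftrightarrow> odd (x \<mu>)"
  unfolding fwd_def by (simp add: even_mod_even_iff)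

lemma even_bwd_iff:
  assumes "\<mu> < 4" "even (L \<mu>)" "x \<in> sites L"
  shows "even (bwd L \<mu> x \<mu>) \<longleftrightarrow> odd (x \<mu>)"
proof -
  have "0 < L \<mu>" using assms unfolding sites_def by auto
  with assms(2) have "x \<mu> + L \<mu> - 1 = x \<mu> + (L \<mu> - 1)" "odd (L \<mu> - 1)" by auto
  then show ?thesis unfolding bwd_def using assms(2) by (simp add: even_mod_even_iff)
qed

section \<open>The Wilson hopping term\<close>

definition wilson_hop_dir :: "(nat \<Rightarrow> nat) \<Rightarrow> real \<Rightarrow> (nat \<Rightarrow> nat \<Rightarrow> nat \<Rightarrow> complex)
    \<Rightarrow> (nat \<Rightarrow> (nat \<Rightarrow> nat) \<Rightarrow> nat \<Rightarrow> nat \<Rightarrow> complex) \<Rightarrow> nat \<Rightarrow> idx \<Rightarrow> idx \<Rightarrow> complex" where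
  "wilson_hop_dir L \<kappa> \<gamma> U \<nu> = (\<lambda>(x, s, c) (y, t, d). complex_of_real \<kappa> * (
      (if y = fwd L \<nu> x then (idm s t - \<gamma> \<nu> s t) * U \<nu> x c d else 0)
    + (if y = bwd L \<nu> x then (idm s t + \<gamma> \<nu> s t) * cnj (U \<nu> (bwd L \<nu> x) d c) else 0)))"

lemma wilson_hop_eq_sum_dir: "wilson_hop L \<kappa> \<gamma> U i j = (\<Sum>\<nu><4. wilson_hop_dir L \<kappa> \<gamma> U \<nu> i j)"
  by (cases i rule: prod_cases3; cases j rule: prod_cases3)
     (simp add: wilson_hop_def wilson_hop_dir_def sum_distrib_left)

lemma wilson_hop_dir_nonzero:
  "wilson_hop_dir L \<kappa> \<gamma> U \<nu> (x, s, c) (y, t, d) \<noteq> 0 \<Longrightarrow> y = fwd L \<nu> x \<or> y = bwd L \<nu> x"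
  unfolding wilson_hop_dir_def by (auto split: if_splits)

lemma wilson_hop_dir_zero_same_parity:
  assumes "\<mu> < 4" "even (L \<mu>)" "i \<in> indices L Nc" "even (fst i \<mu>) \<longleftrightarrow> even (fst j \<mu>)"
  shows "wilson_hop_dir L \<kappa> \<gamma> U \<mu> i j = 0"
proof (rule ccontr)
  assume nonzero: "wilson_hop_dir L \<kappa> \<gamma> U \<mu> i j \<noteq> 0"
  obtain x s c y t d where ij: "i = (x, s, c)" "j = (y, t, d)" by (cases i, cases j) auto
  have x: "x \<in> sites L" using assms(3) ij unfolding indices_def by auto
  have "y = fwd L \<mu> x \<or> y = bwd L \<mu> x"
    using wilson_hop_dir_nonzero nonzero ij by blast
  then show False
    using assms ij even_fwd_iff[of L \<mu> x] even_bwd_iff[OF assms(1,2) x] by auto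
qed

lemma wilson_hop_dir_zero_opposite_parity:
  assumes "\<nu> \<noteq> \<mu>" "even (fst i \<mu>) \<noteq> even (fst j \<mu>)"
  shows "wilson_hop_dir L \<kappa> \<gamma> U \<nu> i j = 0"
proof (rule ccontr)
  assume nonzero: "wilson_hop_dir L \<kappa> \<gamma> U \<nu> i j \<noteq> 0"
  obtain x s c y t d where ij: "i = (x, s, c)" "j = (y, t, d)" by (cases i, cases j) auto
  have "y = fwd L \<nu> x \<or> y = bwd L \<nu> x"
    using wilson_hop_dir_nonzero nonzero ij by blast
  then show False using assms ij by auto
qed

definition gamma_mult :: "(nat \<Rightarrow> nat \<Rightarrow> nat \<Rightarrow> complex) \<Rightarrow> nat \<Rightarrow> (idx \<Rightarrow> complex) \<Rightarrow> idx \<Rightarrow> complex" where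
  "gamma_mult \<gamma> \<nu> w = (\<lambda>(x, s, c). \<Sum>t<4. \<gamma> \<nu> s t * w (x, t, c))"

definition transport :: "nat \<Rightarrow> ((nat \<Rightarrow> nat) \<Rightarrow> nat \<Rightarrow> nat) \<Rightarrow> ((nat \<Rightarrow> nat) \<Rightarrow> nat \<Rightarrow> nat \<Rightarrow> complex)
    \<Rightarrow> (idx \<Rightarrow> complex) \<Rightarrow> idx \<Rightarrow> complex" where
  "transport Nc \<sigma> W w = (\<lambda>(x, s, c). \<Sum>d<Nc. W x c d * w (\<sigma> x, s, d))"

lemma sum_indices: "(\<Sum>i\<in>indices L Nc. f i) = (\<Sum>x\<in>sites L. \<Sum>s<4. \<Sum>c<Nc. f (x, s, c))"
  unfolding indices_def by (simp add: sum.cartesian_product)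

lemma sum_idm_mult_lessThan: "s < (n::nat) \<Longrightarrow> (\<Sum>t<n. idm s t * g t) = g s"
  by (simp add: sum_idm_mult)

lemma wilson_hop_dir_apply:
  fixes Nc :: nat and U :: "nat \<Rightarrow> (nat \<Rightarrow> nat) \<Rightarrow> nat \<Rightarrow> nat \<Rightarrow> complex" and w :: "idx \<Rightarrow> complex"
  assumes x: "x \<in> sites L" and s: "s < 4" and \<nu>: "\<nu> < 4" "0 < L \<nu>"
  defines "a \<equiv> transport Nc (fwd L \<nu>) (U \<nu>) w"
    and "b \<equiv> transport Nc (bwd L \<nu>) (\<lambda>x c d. cnj (U \<nu> (bwd L \<nu> x) d c)) w"
  shows "mat_apply (indices L Nc) (wilson_hop_dir L \<kappa> \<gamma> U \<nu>) w (x, s, c)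
    = complex_of_real \<kappa> * (a (x, s, c) - gamma_mult \<gamma> \<nu> a (x, s, c)
        + b (x, s, c) + gamma_mult \<gamma> \<nu> b (x, s, c))"
proof -
  let ?f = "fwd L \<nu> x" and ?b = "bwd L \<nu> x" and ?k = "complex_of_real \<kappa>"
  define P where "P = (\<Sum>t<4. \<Sum>d<Nc. (idm s t - \<gamma> \<nu> s t) * U \<nu> x c d * w (?f, t, d))"
  define Q where "Q = (\<Sum>t<4. \<Sum>d<Nc. (idm s t + \<gamma> \<nu> s t) * cnj (U \<nu> ?b d c) * w (?b, t, d))"
  have inner: "(\<Sum>t<4. \<Sum>d<Nc. wilson_hop_dir L \<kappa> \<gamma> U \<nu> (x, s, c) (y, t, d) * w (y, t, d))
      = (if y = ?f then ?k * P else 0) + (if y = ?b then ?k * Q else 0)" for y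
    unfolding wilson_hop_dir_def P_def Q_def
    by (simp add: ring_distribs sum.distrib sum_distrib_left mult.assoc)
  have "mat_apply (indices L Nc) (wilson_hop_dir L \<kappa> \<gamma> U \<nu>) w (x, s, c)
      = (\<Sum>y\<in>sites L. (if y = ?f then ?k * P else 0) + (if y = ?b then ?k * Q else 0))"
    unfolding mat_apply_def sum_indices inner ..
  also have "\<dots> = ?k * (P + Q)"
    using fwd_in_sites[OF \<nu> x] bwd_in_sites[OF \<nu> x] finite_sites[of L]
    by (simp add: sum.distrib ring_distribs)
  also have "P = a (x, s, c) - gamma_mult \<gamma> \<nu> a (x, s, c)"
  proof -
    have "P = (\<Sum>t<4. idm s t * a (x, t, c)) - (\<Sum>t<4. \<gamma> \<nu> s t * a (x, t, c))"
      unfolding P_def a_def transport_def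
      by (simp add: sum_distrib_left ring_distribs sum_subtractf mult.assoc)
    then show ?thesis using sum_idm_mult_lessThan[OF s] by (simp add: gamma_mult_def)
  qed
  also have "Q = b (x, s, c) + gamma_mult \<gamma> \<nu> b (x, s, c)"
  proof -
    have "Q = (\<Sum>t<4. idm s t * b (x, t, c)) + (\<Sum>t<4. \<gamma> \<nu> s t * b (x, t, c))"
      unfolding Q_def b_def transport_def
      by (simp add: sum_distrib_left ring_distribs sum.distrib mult.assoc)
    then show ?thesis using sum_idm_mult_lessThan[OF s] by (simp add: gamma_mult_def)
  qed
  finally show ?thesis by (simp add: algebra_simps)
qed

definition inner_on :: "'i set \<Rightarrow> ('i \<Rightarrow> complex) \<Rightarrow> ('i \<Rightarrow> complex) \<Rightarrow> complex" where
  "inner_on S u v = (\<Sum>i\<in>S. cnj (u i) * v i)"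

lemma inner_on_add_left: "inner_on S (\<lambda>i. u i + w i) v = inner_on S u v + inner_on S w v"
  unfolding inner_on_def by (simp add: ring_distribs sum.distrib)

lemma inner_on_add_right: "inner_on S v (\<lambda>i. u i + w i) = inner_on S v u + inner_on S v w"
  unfolding inner_on_def by (simp add: ring_distribs sum.distrib)

lemma inner_on_diff_left: "inner_on S (\<lambda>i. u i - w i) v = inner_on S u v - inner_on S w v"
  unfolding inner_on_def by (simp add: ring_distribs sum_subtractf)

lemma inner_on_diff_right: "inner_on S v (\<lambda>i. u i - w i) = inner_on S v u - inner_on S v w"
  unfolding inner_on_def by (simp add: ring_distribs sum_subtractf)

lemma inner_on_cong:
  "(\<And>i. i \<in> S \<Longrightarrow> u i = u' i) \<Longrightarrow> (\<And>i. i \<in> S \<Longrightarrow> v i = v' i) \<Longrightarrow> inner_on S u v = inner_on S u' v'"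
  unfolding inner_on_def by simp

lemma inner_on_scale: "inner_on S (\<lambda>i. k * u i) (\<lambda>i. k * v i) = cnj k * k * inner_on S u v"
  unfolding inner_on_def by (simp add: sum_distrib_left mult_ac)

lemma inner_on_self: "inner_on S u u = complex_of_real ((vnorm S u)\<^sup>2)"
proof -
  have "cnj z * z = complex_of_real ((cmod z)\<^sup>2)" for z
    using complex_norm_square[of z] by (simp add: mult.commute)
  then show ?thesis unfolding inner_on_def vnorm_def by (simp add: sum_nonneg)
qed

text \<open>For a self-adjoint involution G the cross terms vanish, since (1 - G) a and (1 + G) b
  are orthogonal.\<close>
lemma inner_on_reflection_sum:
  assumes "\<And>u v. inner_on S (G u) v = inner_on S u (G v)"
    and "\<And>u v. inner_on S u (G (G v)) = inner_on S u v"
  shows "inner_on S (\<lambda>i. a i - G a i + b i + G b i) (\<lambda>i. a i - G a i + b i + G b i)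
    = 2 * inner_on S a a - 2 * inner_on S a (G a) + 2 * inner_on S b b + 2 * inner_on S b (G b)"
  by (simp only: inner_on_add_left inner_on_add_right inner_on_diff_left inner_on_diff_right assms)
     (simp add: algebra_simps)

lemma gamma_hermitian:
  assumes "dirac_gammas \<gamma>" "\<nu> < 4" "s < 4" "t < 4"
  shows "cnj (\<gamma> \<nu> s t) = \<gamma> \<nu> t s"
proof -
  have "\<gamma> \<nu> t s = cnj (\<gamma> \<nu> s t)" using assms unfolding dirac_gammas_def by blast
  then show ?thesis by simp
qed

lemma gamma_square:
  assumes "dirac_gammas \<gamma>" "\<nu> < 4" "s < 4" "t < 4"
  shows "(\<Sum>u<4. \<gamma> \<nu> s u * \<gamma> \<nu> u t) = idm s t"
proof -
  have "(\<Sum>u<4. \<gamma> \<nu> s u * \<gamma> \<nu> u t + \<gamma> \<nu> s u * \<gamma> \<nu> u t) = (if \<nu> = \<nu> \<and> s = t then 2 else 0)"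
    using assms unfolding dirac_gammas_def by blast
  then have "2 * (\<Sum>u<4. \<gamma> \<nu> s u * \<gamma> \<nu> u t) = (if s = t then 2 else 0)"
    by (simp only: sum.distrib mult_2 simp_thms)
  then show ?thesis unfolding idm_def by (cases "s = t") auto
qed

lemma inner_on_gamma_mult:
  assumes "dirac_gammas \<gamma>" "\<nu> < 4"
  shows "inner_on (indices L Nc) (gamma_mult \<gamma> \<nu> u) v = inner_on (indices L Nc) u (gamma_mult \<gamma> \<nu> v)"
proof -
  have "(\<Sum>s<4. \<Sum>c<Nc. cnj (\<Sum>t<4. \<gamma> \<nu> s t * u (x, t, c)) * v (x, s, c))
      = (\<Sum>s<4. \<Sum>c<Nc. cnj (u (x, s, c)) * (\<Sum>t<4. \<gamma> \<nu> s t * v (x, t, c)))" for x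
  proof -
    have "(\<Sum>s<4. \<Sum>c<Nc. cnj (\<Sum>t<4. \<gamma> \<nu> s t * u (x, t, c)) * v (x, s, c))
        = (\<Sum>c<Nc. \<Sum>s<4. \<Sum>t<4. cnj (\<gamma> \<nu> s t) * cnj (u (x, t, c)) * v (x, s, c))"
      by (subst sum.swap) (simp add: sum_distrib_right)
    also have "\<dots> = (\<Sum>c<Nc. \<Sum>s<4. \<Sum>t<4. cnj (u (x, t, c)) * (\<gamma> \<nu> t s * v (x, s, c)))"
      by (intro sum.cong refl) (simp add: gamma_hermitian[OF assms] mult_ac)
    also have "\<dots> = (\<Sum>c<Nc. \<Sum>s<4. \<Sum>t<4. cnj (u (x, s, c)) * (\<gamma> \<nu> s t * v (x, t, c)))"
      by (rule sum.cong[OF refl], rule sum.swap)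
    also have "\<dots> = (\<Sum>s<4. \<Sum>c<Nc. cnj (u (x, s, c)) * (\<Sum>t<4. \<gamma> \<nu> s t * v (x, t, c)))"
      by (subst sum.swap) (simp add: sum_distrib_left)
    finally show ?thesis .
  qed
  then show ?thesis unfolding inner_on_def sum_indices gamma_mult_def by simp
qed

lemma gamma_mult_involution:
  assumes "dirac_gammas \<gamma>" "\<nu> < 4" "i \<in> indices L Nc"
  shows "gamma_mult \<gamma> \<nu> (gamma_mult \<gamma> \<nu> v) i = v i"
proof -
  obtain x s c where i: "i = (x, s, c)" and s: "s < 4" using assms(3) unfolding indices_def by auto
  have "gamma_mult \<gamma> \<nu> (gamma_mult \<gamma> \<nu> v) i = (\<Sum>t<4. \<Sum>t'<4. \<gamma> \<nu> s t * \<gamma> \<nu> t t' * v (x, t', c))"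
    unfolding i gamma_mult_def by (simp add: sum_distrib_left mult.assoc)
  also have "\<dots> = (\<Sum>t'<4. (\<Sum>t<4. \<gamma> \<nu> s t * \<gamma> \<nu> t t') * v (x, t', c))"
    by (subst sum.swap) (simp add: sum_distrib_right)
  also have "\<dots> = (\<Sum>t'<4. idm s t' * v (x, t', c))"
    using gamma_square[OF assms(1,2) s] by simp
  also have "\<dots> = v i" using sum_idm_mult_lessThan[OF s] i by simp
  finally show ?thesis .
qed

lemma gamma_mult_transport: "gamma_mult \<gamma> \<nu> (transport Nc \<sigma> W u) = transport Nc \<sigma> W (gamma_mult \<gamma> \<nu> u)"
proof (intro ext)
  fix i :: idx
  obtain x s c where i: "i = (x, s, c)" by (cases i rule: prod_cases3)
  have "(\<Sum>t<4. \<gamma> \<nu> s t * (\<Sum>d<Nc. W x c d * u (\<sigma> x, t, d)))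
      = (\<Sum>d<Nc. W x c d * (\<Sum>t<4. \<gamma> \<nu> s t * u (\<sigma> x, t, d)))"
    by (simp add: sum_distrib_left mult.left_commute) (rule sum.swap)
  then show "gamma_mult \<gamma> \<nu> (transport Nc \<sigma> W u) i = transport Nc \<sigma> W (gamma_mult \<gamma> \<nu> u) i"
    unfolding i gamma_mult_def transport_def by simp
qed

lemma sum_cnj_unitary_mult:
  fixes n :: nat
  assumes W: "\<And>d d'. d < n \<Longrightarrow> d' < n \<Longrightarrow> (\<Sum>c<n. cnj (W c d) * W c d') = (if d = d' then 1 else 0)"
  shows "(\<Sum>c<n. cnj (\<Sum>d<n. W c d * z d) * (\<Sum>d<n. W c d * z' d)) = (\<Sum>d<n. cnj (z d) * z' d)"
proof -
  have "(\<Sum>c<n. cnj (\<Sum>d<n. W c d * z d) * (\<Sum>d<n. W c d * z' d))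
      = (\<Sum>c<n. \<Sum>d'<n. \<Sum>d<n. cnj (W c d) * W c d' * (cnj (z d) * z' d'))"
    by (simp add: sum_product mult_ac)
  also have "\<dots> = (\<Sum>d'<n. \<Sum>d<n. \<Sum>c<n. cnj (W c d) * W c d' * (cnj (z d) * z' d'))"
    by (subst sum.swap) (intro sum.cong refl sum.swap)
  also have "\<dots> = (\<Sum>d'<n. \<Sum>d<n. (\<Sum>c<n. cnj (W c d) * W c d') * (cnj (z d) * z' d'))"
    by (simp add: sum_distrib_right)
  also have "\<dots> = (\<Sum>d'<n. \<Sum>d<n. if d = d' then cnj (z d) * z' d' else 0)"
    by (intro sum.cong refl) (simp add: W)
  also have "\<dots> = (\<Sum>d<n. cnj (z d) * z' d)"
    by (simp add: sum.delta)
  finally show ?thesis .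
qed

lemma inner_on_transport:
  assumes \<sigma>: "bij_betw \<sigma> (sites L) (sites L)"
    and W: "\<And>x d d'. x \<in> sites L \<Longrightarrow> d < Nc \<Longrightarrow> d' < Nc \<Longrightarrow>
      (\<Sum>c<Nc. cnj (W x c d) * W x c d') = (if d = d' then 1 else 0)"
  shows "inner_on (indices L Nc) (transport Nc \<sigma> W u) (transport Nc \<sigma> W v) = inner_on (indices L Nc) u v"
proof -
  let ?f = "\<lambda>y. \<Sum>s<4. \<Sum>d<Nc. cnj (u (y, s, d)) * v (y, s, d)"
  have "(\<Sum>s<4. \<Sum>c<Nc. cnj (transport Nc \<sigma> W u (x, s, c)) * transport Nc \<sigma> W v (x, s, c)) = ?f (\<sigma> x)"
    if "x \<in> sites L" for x
    unfolding transport_def case_prod_conv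
    by (rule sum.cong[OF refl], rule sum_cnj_unitary_mult) (use W that in auto)
  then have "inner_on (indices L Nc) (transport Nc \<sigma> W u) (transport Nc \<sigma> W v) = (\<Sum>x\<in>sites L. ?f (\<sigma> x))"
    unfolding inner_on_def sum_indices by simp
  also have "\<dots> = (\<Sum>x\<in>sites L. ?f x)" by (rule sum.reindex_bij_betw[OF \<sigma>])
  finally show ?thesis unfolding inner_on_def sum_indices .
qed

lemma inner_on_transport_fwd:
  assumes "gauge_field L Nc U" "\<nu> < 4" "0 < L \<nu>"
  shows "inner_on (indices L Nc) (transport Nc (fwd L \<nu>) (U \<nu>) u) (transport Nc (fwd L \<nu>) (U \<nu>) v)
       = inner_on (indices L Nc) u v"
  by (rule inner_on_transport[OF bij_betw_fwd[of \<nu> L]])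
     (use assms in \<open>auto simp: gauge_field_def unitary_mat_def\<close>)

lemma inner_on_transport_bwd:
  assumes "gauge_field L Nc U" "\<nu> < 4" "0 < L \<nu>"
  defines "W \<equiv> \<lambda>x c d. cnj (U \<nu> (bwd L \<nu> x) d c)"
  shows "inner_on (indices L Nc) (transport Nc (bwd L \<nu>) W u) (transport Nc (bwd L \<nu>) W v)
       = inner_on (indices L Nc) u v"
  by (rule inner_on_transport[OF bij_betw_bwd[of \<nu> L]])
     (use assms bwd_in_sites[of \<nu> L] in \<open>auto simp: gauge_field_def unitary_mat_def\<close>)

lemma vnorm_wilson_hop_dir:
  assumes gam: "dirac_gammas \<gamma>" and gauge: "gauge_field L Nc U"
    and \<nu>: "\<nu> < 4" "0 < L \<nu>" and \<kappa>: "0 \<le> \<kappa>"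
  shows "vnorm (indices L Nc) (mat_apply (indices L Nc) (wilson_hop_dir L \<kappa> \<gamma> U \<nu>) w)
       = 2 * \<kappa> * vnorm (indices L Nc) w"
proof -
  let ?I = "indices L Nc" and ?G = "gamma_mult \<gamma> \<nu>" and ?k = "complex_of_real \<kappa>"
  let ?h = "mat_apply ?I (wilson_hop_dir L \<kappa> \<gamma> U \<nu>) w"
  let ?a = "transport Nc (fwd L \<nu>) (U \<nu>) w"
    and ?b = "transport Nc (bwd L \<nu>) (\<lambda>x c d. cnj (U \<nu> (bwd L \<nu> x) d c)) w"
  have h: "?h i = ?k * (?a i - ?G ?a i + ?b i + ?G ?b i)" if i: "i \<in> ?I" for i
  proof -
    obtain x s c where "i = (x, s, c)" "x \<in> sites L" "s < 4" using i unfolding indices_def by auto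
    then show ?thesis using wilson_hop_dir_apply[where L = L and \<nu> = \<nu>, OF _ _ \<nu>] by simp
  qed
  have "inner_on ?I ?h ?h = inner_on ?I (\<lambda>i. ?k * (?a i - ?G ?a i + ?b i + ?G ?b i))
      (\<lambda>i. ?k * (?a i - ?G ?a i + ?b i + ?G ?b i))"
    by (rule inner_on_cong) (simp_all add: h)
  also have "\<dots> = cnj ?k * ?k *
      inner_on ?I (\<lambda>i. ?a i - ?G ?a i + ?b i + ?G ?b i) (\<lambda>i. ?a i - ?G ?a i + ?b i + ?G ?b i)"
    by (rule inner_on_scale)
  also have "inner_on ?I (\<lambda>i. ?a i - ?G ?a i + ?b i + ?G ?b i) (\<lambda>i. ?a i - ?G ?a i + ?b i + ?G ?b i)
      = 2 * inner_on ?I ?a ?a - 2 * inner_on ?I ?a (?G ?a) + 2 * inner_on ?I ?b ?b + 2 * inner_on ?I ?b (?G ?b)"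
    by (rule inner_on_reflection_sum)
       (simp_all add: inner_on_gamma_mult[OF gam \<nu>(1)] gamma_mult_involution[OF gam \<nu>(1)] cong: inner_on_cong)
  also have "\<dots> = 4 * inner_on ?I w w"
    by (simp add: inner_on_transport_fwd[OF gauge \<nu>] inner_on_transport_bwd[OF gauge \<nu>]
        gamma_mult_transport)
  finally have "complex_of_real ((vnorm ?I ?h)\<^sup>2) = complex_of_real ((2 * \<kappa> * vnorm ?I w)\<^sup>2)"
    unfolding inner_on_self by (simp add: power2_eq_square algebra_simps)
  then have "(vnorm ?I ?h)\<^sup>2 = (2 * \<kappa> * vnorm ?I w)\<^sup>2"
    by (simp only: of_real_eq_iff)
  then show ?thesis
    using \<kappa> vnorm_nonneg power2_eq_iff_nonneg by (metis mult_nonneg_nonneg zero_le_numeral)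
qed

lemma op_bounded_wilson_block:
  assumes XI: "X \<subseteq> indices L Nc" and YI: "Y \<subseteq> indices L Nc" and F: "F \<subseteq> {..<4}"
    and zero: "\<And>\<nu> i j. \<nu> < 4 \<Longrightarrow> \<nu> \<notin> F \<Longrightarrow> i \<in> X \<Longrightarrow> j \<in> Y \<Longrightarrow> wilson_hop_dir L \<kappa> \<gamma> U \<nu> i j = 0"
    and gam: "dirac_gammas \<gamma>" and gauge: "gauge_field L Nc U"
    and L_pos: "\<forall>\<nu><4. 0 < L \<nu>" and \<kappa>: "0 \<le> \<kappa>"
  shows "op_bounded X Y (blk X Y (wilson_hop L \<kappa> \<gamma> U)) (2 * \<kappa> * card F)"
  unfolding op_bounded_def
proof
  fix v :: "idx \<Rightarrow> complex"
  let ?I = "indices L Nc" and ?H = "wilson_hop_dir L \<kappa> \<gamma> U"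
  have finI: "finite ?I" by (rule finite_indices)
  define w where "w = (\<lambda>j. if j \<in> Y then v j else 0)"
  have apply_eq: "mat_apply Y (blk X Y (wilson_hop L \<kappa> \<gamma> U)) v i = (\<Sum>\<nu>\<in>F. mat_apply ?I (?H \<nu>) w i)"
    if i: "i \<in> X" for i
  proof -
    have "mat_apply Y (blk X Y (wilson_hop L \<kappa> \<gamma> U)) v i = (\<Sum>\<nu><4. \<Sum>j\<in>Y. ?H \<nu> i j * v j)"
      unfolding mat_apply_def blk_def wilson_hop_eq_sum_dir using i
      by (simp add: sum_distrib_right sum.swap[of _ Y])
    also have "\<dots> = (\<Sum>\<nu>\<in>F. \<Sum>j\<in>Y. ?H \<nu> i j * v j)"
      by (rule sum.mono_neutral_right) (use F zero i in auto)
    also have "\<dots> = (\<Sum>\<nu>\<in>F. mat_apply ?I (?H \<nu>) w i)"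
      unfolding mat_apply_def w_def using YI finI
      by (simp add: if_distrib[where f = "\<lambda>z. _ * z"] sum.inter_restrict[symmetric] Int_absorb1 cong: if_cong)
    finally show ?thesis .
  qed
  have vnorm_w: "vnorm ?I w = vnorm Y v"
    unfolding vnorm_def w_def using YI finI
    by (simp add: if_distrib[where f = "\<lambda>z. (cmod z)\<^sup>2"] sum.inter_restrict[symmetric] Int_absorb1 cong: if_cong)
  have "vnorm X (mat_apply Y (blk X Y (wilson_hop L \<kappa> \<gamma> U)) v)
      = vnorm X (\<lambda>i. \<Sum>\<nu>\<in>F. mat_apply ?I (?H \<nu>) w i)"
    by (rule vnorm_cong) (rule apply_eq)
  also have "\<dots> \<le> (\<Sum>\<nu>\<in>F. vnorm X (mat_apply ?I (?H \<nu>) w))" by (rule vnorm_sum_le)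
  also have "\<dots> \<le> (\<Sum>\<nu>\<in>F. vnorm ?I (mat_apply ?I (?H \<nu>) w))"
    by (intro sum_mono vnorm_mono_set[OF finI XI])
  also have "\<dots> = (\<Sum>\<nu>\<in>F. 2 * \<kappa> * vnorm ?I w)"
    using F L_pos by (intro sum.cong refl vnorm_wilson_hop_dir[OF gam gauge _ _ \<kappa>]) auto
  finally show "vnorm X (mat_apply Y (blk X Y (wilson_hop L \<kappa> \<gamma> U)) v) \<le> 2 * \<kappa> * card F * vnorm Y v"
    using vnorm_w by (simp add: mult_ac)
qed

lemma op_bounded_wilson_same_parity:
  assumes L_pos: "\<forall>\<nu><4. 0 < L \<nu>" and mu: "\<mu> < 4" and L_even: "even (L \<mu>)"
    and gam: "dirac_gammas \<gamma>" and gauge: "gauge_field L Nc U" and \<kappa>: "0 \<le> \<kappa>"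
    and XI: "X \<subseteq> indices L Nc" and YI: "Y \<subseteq> indices L Nc"
    and parity: "\<And>i j. i \<in> X \<Longrightarrow> j \<in> Y \<Longrightarrow> even (fst i \<mu>) \<longleftrightarrow> even (fst j \<mu>)"
  shows "op_bounded X Y (blk X Y (wilson_hop L \<kappa> \<gamma> U)) (6 * \<kappa>)"
proof -
  have "op_bounded X Y (blk X Y (wilson_hop L \<kappa> \<gamma> U)) (2 * \<kappa> * card ({..<4} - {\<mu>}))"
  proof (rule op_bounded_wilson_block[OF XI YI _ _ gam gauge L_pos \<kappa>])
    show "wilson_hop_dir L \<kappa> \<gamma> U \<nu> i j = 0"
      if "\<nu> < 4" "\<nu> \<notin> {..<4} - {\<mu>}" "i \<in> X" "j \<in> Y" for \<nu> i j
    proof -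
      have "\<nu> = \<mu>" using that by auto
      moreover have "i \<in> indices L Nc" using XI that(3) by auto
      ultimately show ?thesis
        using wilson_hop_dir_zero_same_parity[where L = L, OF mu L_even _ parity[OF that(3,4)]] by simp
    qed
  qed auto
  moreover have "card ({..<4} - {\<mu>}) = 3" using mu by (simp add: card_Diff_singleton)
  ultimately show ?thesis by simp
qed

lemma op_bounded_wilson_opposite_parity:
  assumes L_pos: "\<forall>\<nu><4. 0 < L \<nu>" and mu: "\<mu> < 4"
    and gam: "dirac_gammas \<gamma>" and gauge: "gauge_field L Nc U" and \<kappa>: "0 \<le> \<kappa>"
    and XI: "X \<subseteq> indices L Nc" and YI: "Y \<subseteq> indices L Nc"
    and parity: "\<And>i j. i \<in> X \<Longrightarrow> j \<in> Y \<Longrightarrow> even (fst i \<mu>) \<noteq> even (fst j \<mu>)"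
  shows "op_bounded X Y (blk X Y (wilson_hop L \<kappa> \<gamma> U)) (2 * \<kappa>)"
  using op_bounded_wilson_block[OF XI YI _ _ gam gauge L_pos \<kappa>, of "{\<mu>}"]
    wilson_hop_dir_zero_opposite_parity parity mu by auto

theorem mainTheorem1:
  fixes L :: "nat \<Rightarrow> nat" and Nc :: nat and \<mu> :: nat and \<kappa> :: real
    and \<gamma> :: "nat \<Rightarrow> nat \<Rightarrow> nat \<Rightarrow> complex"
    and U :: "nat \<Rightarrow> (nat \<Rightarrow> nat) \<Rightarrow> nat \<Rightarrow> nat \<Rightarrow> complex"
  assumes L_pos: "\<forall>\<nu><4. 0 < L \<nu>"
    and mu: "\<mu> < 4" and L_even: "even (L \<mu>)"
    and Nc: "0 < Nc"
    and gam: "dirac_gammas \<gamma>"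
    and gauge: "gauge_field L Nc U"
    and kappa: "0 < \<kappa>" "\<kappa> \<le> 1/8"
  shows "let M = wilson_hop L \<kappa> \<gamma> U; B = even_part L Nc \<mu>; R = odd_part L Nc \<mu> in
      opnorm R R (blk R R M) < 1
    \<and> invertible_on R (\<lambda>i j. blk R R idm i j - blk R R M i j)
    \<and> (\<forall>i\<in>R. \<forall>j\<in>R. (\<lambda>l. mat_pow R (blk R R M) l i j) sums res_inv R M i j)
    \<and> nonneg_on B (schur B R M)
    \<and> opnorm B B (eff_hop B R M (geo_full R M)) \<le> 1
    \<and> (\<forall>k\<ge>1. nonneg_on B (schur_approx B R M k)
         \<and> opnorm B B (eff_hop B R M (geo_part R M k)) \<le> 1 - 1/4 * (3/4) ^ k
         \<and> invertible_on B (schur_approx B R M k)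
         \<and> opnorm B B (\<lambda>i j. blk B B idm i j
              - mat_mult B (inv_on B (schur_approx B R M k)) (schur B R M) i j) \<le> 1)"
proof -
  let ?M = "wilson_hop L \<kappa> \<gamma> U" and ?B = "even_part L Nc \<mu>" and ?R = "odd_part L Nc \<mu>"
  have BI: "?B \<subseteq> indices L Nc" and RI: "?R \<subseteq> indices L Nc"
    unfolding even_part_def odd_part_def by auto
  have finB: "finite ?B" and finR: "finite ?R"
    using finite_subset[OF BI] finite_subset[OF RI] finite_indices by auto
  note same = op_bounded_wilson_same_parity[OF L_pos mu L_even gam gauge]
  note opposite = op_bounded_wilson_opposite_parity[OF L_pos mu gam gauge]
  have bb: "op_bounded ?B ?B (blk ?B ?B ?M) (3/4)"
    by (rule op_bounded_mono[OF same[OF _ BI BI]]) (use kappa in \<open>auto simp: even_part_def\<close>)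
  have rr: "op_bounded ?R ?R (blk ?R ?R ?M) (3/4)"
    by (rule op_bounded_mono[OF same[OF _ RI RI]]) (use kappa in \<open>auto simp: odd_part_def\<close>)
  have br: "op_bounded ?B ?R (blk ?B ?R ?M) (1/4)"
    by (rule op_bounded_mono[OF opposite[OF _ BI RI]]) (use kappa in \<open>auto simp: even_part_def odd_part_def\<close>)
  have rb: "op_bounded ?R ?B (blk ?R ?B ?M) (1/4)"
    by (rule op_bounded_mono[OF opposite[OF _ RI BI]]) (use kappa in \<open>auto simp: even_part_def odd_part_def\<close>)
  show ?thesis unfolding Let_def by (rule schur_complement_bounds[OF finB finR bb rr br rb])
qed

end
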